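(* Let $\theta>1$ be real and let $n$ be a positive integer with $n>\log_2\theta$. Then exactly one of the following holds: (i) $M_\theta(n)=\left\lfloor \frac{n}{\log\theta}-\frac12\right\rfloor$ and $n\notin\mathcal A_\theta$; (ii) $M_\theta(n)=\left\lfloor \frac{n}{\log\theta}+\frac12\right\rfloor$ and $n\in\mathcal A_\theta$.
   Context: $\lfloor x\rfloor$ is the floor of $x$ and $\{x\}=x-\lfloor x\rfloor$ its fractional part; $\log$ is the natural logarithm. For real $\theta>1$ and positive integer $n$, $M_\theta(n)=\left\lfloor 1/\{\theta^{1/n}\}\right\rfloor$ and $M'_\theta(n)=\left\lfloor 1/(\theta^{1/n}-1)\right\rfloor$. The set of atypical numbers is $\mathcal A_\theta=\{n\in\mathbb N: M'_\theta(n)\neq \lfloor n/\log\theta-1/2\rfloor\}$, where $\mathbb N$ is the set of positive integers. *)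

theory Defs
  imports Complex_Main
begin

definition M :: "real \<Rightarrow> nat \<Rightarrow> int" where
  "M \<theta> n = \<lfloor>1 / frac (\<theta> powr (1 / real n))\<rfloor>"

definition M' :: "real \<Rightarrow> nat \<Rightarrow> int" where
  "M' \<theta> n = \<lfloor>1 / (\<theta> powr (1 / real n) - 1)\<rfloor>"

definition atypical :: "real \<Rightarrow> nat set" where
  "atypical \<theta> = {n. n \<ge> 1 \<and> M' \<theta> n \<noteq> \<lfloor>real n / ln \<theta> - 1/2\<rfloor>}"

end

theory Submission
  imports Defs
begin

(* Write t = ln \<theta> / n, so that \<theta> powr (1/n) = exp t and n / ln \<theta> = 1/t.
   The hypothesis n > log 2 \<theta> means t < ln 2, i.e. 1 < exp t < 2; hence the
   fractional part of \<theta> powr (1/n) is exp t - 1 and M \<theta> n = M' \<theta> n.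
   The analytic core is the two-sided estimate
        1/t - 1/2 < 1 / (exp t - 1) < 1/t      (t > 0),
   the lower half being equivalent to (2 - t) exp t < 2 + t, which is proved
   by the mean value theorem.  Consequently the floor of 1/(exp t - 1) is
   either \<lfloor>1/t - 1/2\<rfloor> or one more, namely \<lfloor>1/t + 1/2\<rfloor>; the first case is
   exactly n \<notin> atypical \<theta>, the second n \<in> atypical \<theta>, giving the dichotomy. *)

(* The inequality (2 - t) e^t < 2 + t for t > 0: the function
   (2 + s) e^(-s) + s - 2 vanishes at 0 and is strictly increasing, since its
   derivative 1 - (1 + s) e^(-s) is positive for s > 0. *)
lemma exp_pade_bound:
  fixes t :: real
  assumes t: "t > 0"
  shows "(2 - t) * exp t < 2 + t"
proof -
  define f where "f = (\<lambda>s::real. (2 + s) * exp (-s) + s - 2)"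
  have deriv: "\<And>x. 0 \<le> x \<Longrightarrow> x \<le> t \<Longrightarrow> DERIV f x :> (1 - (1 + x) * exp (-x))"
    unfolding f_def by (auto intro!: derivative_eq_intros simp: algebra_simps)
  obtain z where z: "z > 0" "z < t" "f t - f 0 = (t - 0) * (1 - (1 + z) * exp (-z))"
    using MVT2[OF t deriv] by blast
  have "1 + z < exp z"
    using z(1) exp_minus_greater[of "-z"] by simp
  hence "(1 + z) * exp (-z) < 1"
    by (simp add: exp_minus field_simps)
  hence "f t > 0"
    using z t by (simp add: f_def)
  hence "2 - t < (2 + t) * exp (-t)"
    by (simp add: f_def)
  hence "(2 - t) * exp t < (2 + t) * exp (-t) * exp t"
    by simp
  also have "\<dots> = 2 + t"
    by (simp add: exp_minus field_simps)
  finally show ?thesis .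
qed

(* Two-sided estimate of 1/(e^t - 1) by the first terms of its Laurent
   expansion 1/t - 1/2 + t/12 - \<dots>. *)
lemma inverse_exp_minus_one_bounds:
  fixes t :: real
  assumes t: "t > 0"
  shows "1 / (exp t - 1) < 1 / t" and "1 / t - 1 / 2 < 1 / (exp t - 1)"
proof -
  have gt: "exp t - 1 > t"
    using t exp_minus_greater[of "-t"] by simp
  then show "1 / (exp t - 1) < 1 / t"
    using t by (simp add: frac_less2)
  have "(2 - t) * (exp t - 1) < 2 * t"
    using exp_pade_bound[OF t] by (simp add: algebra_simps)
  hence "(2 - t) / (2 * t) < 1 / (exp t - 1)"
    using gt t by (simp add: field_simps)
  moreover have "1 / t - 1 / 2 = (2 - t) / (2 * t)"
    using t by (simp add: field_simps)
  ultimately show "1 / t - 1 / 2 < 1 / (exp t - 1)"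
    by simp
qed

lemma floor_in_unit_interval:
  fixes a y :: real
  assumes "a \<le> y" and "y \<le> a + 1"
  shows "\<lfloor>y\<rfloor> = \<lfloor>a\<rfloor> \<or> \<lfloor>y\<rfloor> = \<lfloor>a\<rfloor> + 1"
proof -
  have "\<lfloor>a\<rfloor> \<le> \<lfloor>y\<rfloor>"
    using assms(1) by (rule floor_mono)
  moreover have "\<lfloor>y\<rfloor> \<le> \<lfloor>a + 1\<rfloor>"
    using assms(2) by (rule floor_mono)
  ultimately show ?thesis
    by linarith
qed

(* Under n > log 2 \<theta> the n-th root of \<theta> lies in (1, 2), so its fractional
   part is the root minus one and the two counting functions agree. *)
lemma M_eq_M':
  fixes \<theta> :: real and n :: nat
  assumes "\<theta> > 1" and "n \<ge> 1" and "real n > log 2 \<theta>"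
  shows "M \<theta> n = M' \<theta> n"
proof -
  have root: "\<theta> powr (1 / real n) = exp (ln \<theta> / real n)"
    using assms(1) by (simp add: powr_def)
  have "ln \<theta> < real n * ln 2"
    using assms(3) by (simp add: log_def divide_less_eq)
  hence "ln \<theta> / real n < ln 2"
    using assms(2) by (simp add: divide_less_eq mult.commute)
  hence below2: "\<theta> powr (1 / real n) < 2"
    unfolding root by (metis exp_less_cancel_iff exp_ln zero_less_numeral)
  have above1: "\<theta> powr (1 / real n) > 1"
    using assms(1,2) by simp
  have "frac (\<theta> powr (1 / real n)) = \<theta> powr (1 / real n) - 1"
    using above1 below2 by (simp add: frac_def floor_eq_iff)
  then show ?thesis
    by (simp add: M_def M'_def)
qed

theorem theorem1:
  fixes \<theta> :: real and n :: nat
  assumes "\<theta> > 1" and "n \<ge> 1" and "real n > log 2 \<theta>"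
  shows "(M \<theta> n = \<lfloor>real n / ln \<theta> - 1/2\<rfloor> \<and> n \<notin> atypical \<theta>) \<noteq>
         (M \<theta> n = \<lfloor>real n / ln \<theta> + 1/2\<rfloor> \<and> n \<in> atypical \<theta>)"
proof -
  define t where "t = ln \<theta> / real n"
  define y where "y = 1 / (exp t - 1)"
  define a where "a = 1 / t - 1 / 2"
  have t: "t > 0"
    using assms(1,2) by (simp add: t_def)
  have M_y: "M \<theta> n = \<lfloor>y\<rfloor>"
    using M_eq_M'[OF assms] assms(1) by (simp add: M'_def powr_def t_def y_def)
  have ratio: "real n / ln \<theta> - 1/2 = a" "real n / ln \<theta> + 1/2 = a + 1"
    by (simp_all add: a_def t_def)
  have atyp: "n \<in> atypical \<theta> \<longleftrightarrow> \<lfloor>y\<rfloor> \<noteq> \<lfloor>a\<rfloor>"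
    using assms(2) M_eq_M'[OF assms] M_y by (simp add: atypical_def ratio)
  have "\<lfloor>y\<rfloor> = \<lfloor>a\<rfloor> \<or> \<lfloor>y\<rfloor> = \<lfloor>a\<rfloor> + 1"
    using inverse_exp_minus_one_bounds[OF t]
    by (intro floor_in_unit_interval) (simp_all add: a_def y_def)
  then show ?thesis
    unfolding M_y ratio atyp by auto
qed

end
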